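(* Let $\alpha>0$, $\eta=\alpha/(L+\alpha)$, $z_0\in\mathrm{dom}\, f^*$, and consider GCG: for $k\ge0$, $\bar z_k=\mathrm{argmin}_{v}\{\langle-\nabla(h^\alpha)^*(-z_k),v\rangle+f^*(v)\}$, $z_{k+1}=\eta\bar z_k+(1-\eta)z_k$. Define $\tilde y_0=\nabla(h^\alpha)^*(-z_0)$ and $\tilde y_{k+1}=(1-\eta)\tilde y_k+\eta\nabla(h^\alpha)^*(-z_k)$ for $k\ge0$. Then for all $k\ge0$, $\psi^\alpha(z_k)+\phi^\alpha(\tilde y_k)\le\frac{\psi^\alpha(z_0)+\phi^\alpha(\tilde y_0)}{(1+\alpha/L)^k}$.
   Context: Let $\|\cdot\|$ be a norm on $\mathbb{R}^n$ with dual norm $\|\cdot\|_*$. Let $f:\mathbb{R}^n\to\mathbb{R}$ be convex, differentiable and $L$-smooth ($L>0$) with respect to $\|\cdot\|$, $h:\mathbb{R}^n\to(-\infty,\infty]$ closed proper convex with bounded domain, and $w:\mathbb{R}^n\to[0,+\infty]$ closed, $1$-strongly convex with respect to $\|\cdot\|$ on $\mathrm{dom}\, h$, with $\max_{\mathrm{dom}\, h}w<\infty$. Let $h^\alpha=h+\alpha w$, $\phi^\alpha=f+h^\alpha$, $\psi^\alpha(z)=(h^\alpha)^*(-z)+f^*(z)$, with $^*$ the convex conjugate ($(h^\alpha)^*$ is differentiable with $(1/\alpha)$-Lipschitz gradient; $f^*$ is $(1/L)$-strongly convex w.r.t. $\|\cdot\|_*$). *)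

theory Defs
  imports "HOL-Analysis.Analysis"
begin

definition is_norm :: "('a::real_vector \<Rightarrow> real) \<Rightarrow> bool" where
  "is_norm N \<longleftrightarrow> (\<forall>x. N x = 0 \<longleftrightarrow> x = 0) \<and> (\<forall>c x. N (c *\<^sub>R x) = \<bar>c\<bar> * N x)
     \<and> (\<forall>x y. N (x + y) \<le> N x + N y)"

definition dual_norm :: "('a::real_inner \<Rightarrow> real) \<Rightarrow> 'a \<Rightarrow> real" where
  "dual_norm N z = Sup {z \<bullet> x | x. N x \<le> 1}"

definition edom :: "('a \<Rightarrow> ereal) \<Rightarrow> 'a set" where
  "edom g = {x. g x < \<infinity>}"

definition proper_fun :: "('a \<Rightarrow> ereal) \<Rightarrow> bool" where
  "proper_fun g \<longleftrightarrow> (\<forall>x. g x \<noteq> -\<infinity>) \<and> (\<exists>x. g x < \<infinity>)"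

definition epigraph :: "('a \<Rightarrow> ereal) \<Rightarrow> ('a \<times> real) set" where
  "epigraph g = {(x, t). g x \<le> ereal t}"

definition convex_fun :: "('a::real_vector \<Rightarrow> ereal) \<Rightarrow> bool" where
  "convex_fun g \<longleftrightarrow> convex (epigraph g)"

definition closed_fun :: "('a::real_normed_vector \<Rightarrow> ereal) \<Rightarrow> bool" where
  "closed_fun g \<longleftrightarrow> closed (epigraph g)"

definition strongly_convex_on :: "'a set \<Rightarrow> real \<Rightarrow> ('a::real_vector \<Rightarrow> real) \<Rightarrow> ('a \<Rightarrow> ereal) \<Rightarrow> bool" where
  "strongly_convex_on S \<mu> N g \<longleftrightarrow>
     (\<forall>x\<in>S. \<forall>y\<in>S. \<forall>t::real. 0 \<le> t \<and> t \<le> 1 \<longrightarrow>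
        g (t *\<^sub>R x + (1 - t) *\<^sub>R y)
          \<le> ereal t * g x + ereal (1 - t) * g y - ereal (\<mu> / 2 * t * (1 - t) * (N (x - y))\<^sup>2))"

definition conj :: "('a::real_inner \<Rightarrow> ereal) \<Rightarrow> 'a \<Rightarrow> ereal" where
  "conj g z = (SUP x. ereal (z \<bullet> x) - g x)"

end

theory Submission
  imports Defs
begin

text \<open>Let x_k = \<nabla>(h^\<alpha>)*(-z_k); it is the maximiser defining (h^\<alpha>)*(-z_k), and strong convexity
  of w gives quadratic growth of h^\<alpha> around it. Hence the conjugate (h^\<alpha>)* decreases from -z_k to
  -z_(k+1) by at least \<alpha>/2 N(x_(k+1) - x_k)^2 more than its linearisation at -z_(k+1) predicts,
  while L-smoothness of f bounds f* at the convex combination z_(k+1) with exactly the same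
  quadratic term, because \<eta>/(1 - \<eta>) = \<alpha>/L. Adding the two bounds, the choice of zbar_k (compared
  with the competitor \<nabla>f(x_k), at which Fenchel-Young is an equality) and convexity of \<phi>^\<alpha>
  along y_(k+1) = (1 - \<eta>) y_k + \<eta> x_k show that the gap \<psi>^\<alpha>(z_k) + \<phi>^\<alpha>(y_k) shrinks by the
  factor 1 - \<eta> = 1/(1 + \<alpha>/L) in every step.\<close>

section \<open>Norms on Euclidean spaces\<close>

lemma is_normD:
  assumes "is_norm N"
  shows "N x = 0 \<longleftrightarrow> x = 0" "N (c *\<^sub>R x) = \<bar>c\<bar> * N x" "N (x + y) \<le> N x + N y"
  using assms unfolding is_norm_def by blast+

lemma is_norm_0:
  assumes "is_norm N"
  shows "N 0 = 0"
  using is_normD(1)[OF assms] by simp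

lemma is_norm_minus:
  assumes "is_norm N"
  shows "N (- x) = N x"
  using is_normD(2)[OF assms, of "-1" x] by simp

lemma is_norm_nonneg:
  assumes "is_norm N"
  shows "0 \<le> N x"
  using is_normD(3)[OF assms, of x "- x"] is_norm_0[OF assms] is_norm_minus[OF assms, of x]
  by simp

lemma is_norm_le_norm:
  fixes N :: "'a::euclidean_space \<Rightarrow> real"
  assumes N: "is_norm N"
  shows "N x \<le> (\<Sum>b\<in>Basis. N b) * norm x"
proof -
  have N_sum: "N (sum g S) \<le> (\<Sum>b\<in>S. N (g b))" if "finite S" for g and S :: "'a set"
    using that by (induction S rule: finite_induct)
      (auto simp: is_norm_0[OF N] intro: order_trans[OF is_normD(3)[OF N]])
  have "N x = N (\<Sum>b\<in>Basis. (x \<bullet> b) *\<^sub>R b)"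
    by (simp add: euclidean_representation)
  also have "\<dots> \<le> (\<Sum>b\<in>Basis. \<bar>x \<bullet> b\<bar> * N b)"
    using N_sum[of Basis "\<lambda>b. (x \<bullet> b) *\<^sub>R b"] by (simp add: is_normD(2)[OF N])
  also have "\<dots> \<le> (\<Sum>b\<in>Basis. norm x * N b)"
    by (intro sum_mono mult_right_mono) (auto simp: Basis_le_norm is_norm_nonneg[OF N])
  finally show ?thesis
    by (simp add: sum_distrib_left mult.commute)
qed

lemma continuous_on_is_norm:
  fixes N :: "'a::euclidean_space \<Rightarrow> real"
  assumes N: "is_norm N"
  shows "continuous_on S N"
proof (rule lipschitz_on_continuous_on)
  show "(\<Sum>b\<in>Basis. N b)-lipschitz_on S N"
  proof (rule lipschitz_onI)
    fix x y
    have "N x \<le> N y + N (x - y)" "N y \<le> N x + N (x - y)"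
      using is_normD(3)[OF N, of y "x - y"] is_normD(3)[OF N, of x "y - x"]
        is_norm_minus[OF N, of "x - y"] by simp_all
    then show "dist (N x) (N y) \<le> (\<Sum>b\<in>Basis. N b) * dist x y"
      using is_norm_le_norm[OF N, of "x - y"] by (simp add: dist_real_def dist_norm)
  qed (simp add: sum_nonneg is_norm_nonneg[OF N])
qed

lemma is_norm_ge_norm:
  fixes N :: "'a::euclidean_space \<Rightarrow> real"
  assumes N: "is_norm N"
  obtains c where "c > 0" "\<And>x. c * norm x \<le> N x"
proof -
  obtain b :: 'a where "b \<in> Basis"
    using nonempty_Basis by blast
  then have "sphere (0::'a) 1 \<noteq> {}"
    by (auto intro: exI[of _ b])
  then obtain p where p: "p \<in> sphere 0 1" and p_min: "\<And>y. y \<in> sphere 0 1 \<Longrightarrow> N p \<le> N y"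
    using continuous_attains_inf[OF compact_sphere _ continuous_on_is_norm[OF N]] by blast
  have "N p > 0"
    using p is_norm_nonneg[OF N, of p] is_normD(1)[OF N, of p] by auto
  moreover have "N p * norm x \<le> N x" for x
  proof (cases "x = 0")
    case False
    then have "N p \<le> N ((1 / norm x) *\<^sub>R x)"
      by (intro p_min) simp
    then show ?thesis
      using False by (simp add: is_normD(2)[OF N] field_simps)
  qed (simp add: is_norm_0[OF N])
  ultimately show thesis
    using that by blast
qed

lemma inner_le_dual_norm:
  fixes N :: "'a::euclidean_space \<Rightarrow> real"
  assumes N: "is_norm N"
  shows "a \<bullet> x \<le> dual_norm N a * N x"
proof (cases "x = 0")
  case False
  obtain c where c: "c > 0" "\<And>x. c * norm x \<le> N x"
    using is_norm_ge_norm[OF N] by blast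
  have "bdd_above {a \<bullet> x | x. N x \<le> 1}"
  proof (rule bdd_aboveI)
    fix r assume "r \<in> {a \<bullet> x | x. N x \<le> 1}"
    then obtain x where x: "r = a \<bullet> x" "N x \<le> 1"
      by blast
    have "r \<le> norm a * norm x"
      using x(1) norm_cauchy_schwarz by simp
    also have "\<dots> \<le> norm a * (1 / c)"
      using c x(2) order_trans[OF c(2)[of x] x(2)] by (intro mult_left_mono) (simp_all add: field_simps)
    finally show "r \<le> norm a / c"
      by simp
  qed
  moreover have N_pos: "N x > 0"
    using False is_norm_nonneg[OF N, of x] is_normD(1)[OF N, of x] by auto
  then have "a \<bullet> ((1 / N x) *\<^sub>R x) \<in> {a \<bullet> x | x. N x \<le> 1}"
    by (intro CollectI exI[of _ "(1 / N x) *\<^sub>R x"]) (simp add: is_normD(2)[OF N])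
  ultimately have "a \<bullet> ((1 / N x) *\<^sub>R x) \<le> dual_norm N a"
    unfolding dual_norm_def by (rule cSup_upper[rotated])
  then show ?thesis
    using N_pos by (simp add: field_simps)
qed (simp add: is_norm_0[OF N])

section \<open>Smooth convex functions and their conjugates\<close>

lemma has_derivative_along_line:
  assumes "(f has_derivative (\<lambda>w. g \<bullet> w)) (at (x + t *\<^sub>R v))"
  shows "((\<lambda>t. f (x + t *\<^sub>R v)) has_real_derivative g \<bullet> v) (at t)"
proof -
  have "((\<lambda>s. x + s *\<^sub>R v) has_derivative (\<lambda>s. s *\<^sub>R v)) (at t)"
    by (auto intro!: derivative_eq_intros)
  from has_derivative_compose[OF this, of f] assms
  have "((\<lambda>t. f (x + t *\<^sub>R v)) has_derivative (\<lambda>s. g \<bullet> (s *\<^sub>R v))) (at t)"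
    by blast
  then show ?thesis
    unfolding has_field_derivative_def by (rule has_derivative_eq_rhs) (simp add: fun_eq_iff)
qed

lemma convex_gradient_inequality:
  fixes f :: "'a::real_inner \<Rightarrow> real"
  assumes f_convex: "convex_on UNIV f"
    and f_grad: "\<And>x. (f has_derivative (\<lambda>v. gradf x \<bullet> v)) (at x)"
  shows "f x + gradf x \<bullet> (y - x) \<le> f y"
proof -
  define g where "g t = f (x + t *\<^sub>R (y - x))" for t
  have "convex_on UNIV g"
  proof (rule convex_onI)
    fix t a b :: real
    assume "0 < t" "t < 1"
    moreover have "x + ((1 - t) *\<^sub>R a + t *\<^sub>R b) *\<^sub>R (y - x)
        = (1 - t) *\<^sub>R (x + a *\<^sub>R (y - x)) + t *\<^sub>R (x + b *\<^sub>R (y - x))"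
      by (simp add: algebra_simps)
    ultimately show "g ((1 - t) *\<^sub>R a + t *\<^sub>R b) \<le> (1 - t) * g a + t * g b"
      unfolding g_def using convex_onD[OF f_convex, of t] by simp
  qed simp
  moreover have "(g has_real_derivative gradf x \<bullet> (y - x)) (at 0)"
    unfolding g_def using has_derivative_along_line[of f "gradf x" x 0 "y - x"] f_grad by simp
  ultimately have "gradf x \<bullet> (y - x) * (1 - 0) \<le> g 1 - g 0"
    by (intro convex_on_imp_above_tangent) auto
  then show ?thesis
    unfolding g_def by simp
qed

lemma smooth_descent:
  fixes f :: "'a::euclidean_space \<Rightarrow> real"
  assumes N: "is_norm N"
    and f_grad: "\<And>x. (f has_derivative (\<lambda>v. gradf x \<bullet> v)) (at x)"
    and f_smooth: "\<And>x x'. dual_norm N (gradf x - gradf x') \<le> L * N (x - x')"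
  shows "f (y + v) \<le> f y + gradf y \<bullet> v + L / 2 * (N v)\<^sup>2"
proof -
  define \<phi> where "\<phi> t = f (y + t *\<^sub>R v) - t * (gradf y \<bullet> v) - L / 2 * t\<^sup>2 * (N v)\<^sup>2" for t
  have "\<phi> 1 \<le> \<phi> 0"
  proof (rule DERIV_nonpos_imp_nonincreasing[of 0 1 \<phi>])
    fix t :: real assume t: "0 \<le> t" "t \<le> 1"
    have "t * ((gradf (y + t *\<^sub>R v) - gradf y) \<bullet> v) = (gradf (y + t *\<^sub>R v) - gradf y) \<bullet> (t *\<^sub>R v)"
      by simp
    also have "\<dots> \<le> dual_norm N (gradf (y + t *\<^sub>R v) - gradf y) * N (t *\<^sub>R v)"
      by (rule inner_le_dual_norm[OF N])
    also have "\<dots> \<le> L * N (t *\<^sub>R v) * N (t *\<^sub>R v)"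
      using f_smooth[of "y + t *\<^sub>R v" y] by (intro mult_right_mono) (simp_all add: is_norm_nonneg[OF N])
    also have "\<dots> = t * (L * t * (N v)\<^sup>2)"
      using t by (simp add: is_normD(2)[OF N] power2_eq_square)
    finally have "(gradf (y + t *\<^sub>R v) - gradf y) \<bullet> v \<le> L * t * (N v)\<^sup>2"
      using t by (cases "t = 0") simp_all
    moreover have "(\<phi> has_real_derivative
        (gradf (y + t *\<^sub>R v) - gradf y) \<bullet> v - L * t * (N v)\<^sup>2) (at t)"
      unfolding \<phi>_def
      by (rule derivative_eq_intros has_derivative_along_line[OF f_grad] | simp add: inner_diff_left)+
    ultimately show "\<exists>d. (\<phi> has_real_derivative d) (at t) \<and> d \<le> 0"
      by auto
  qed simp
  then show ?thesis
    unfolding \<phi>_def by simp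
qed

lemma smooth_two_point:
  fixes f :: "'a::euclidean_space \<Rightarrow> real"
  assumes N: "is_norm N"
    and f_grad: "\<And>x. (f has_derivative (\<lambda>v. gradf x \<bullet> v)) (at x)"
    and f_smooth: "\<And>x x'. dual_norm N (gradf x - gradf x') \<le> L * N (x - x')"
    and t: "0 \<le> t" "t < 1"
  shows "t * f (y - v) + (1 - t) * f (y + (t / (1 - t)) *\<^sub>R v)
           \<le> f y + L * t / (2 * (1 - t)) * (N v)\<^sup>2"
proof -
  define s where "s = t / (1 - t)"
  have s: "s \<ge> 0" "(1 - t) * s = t"
    using t by (simp_all add: s_def)
  then have "(1 - t) * s\<^sup>2 = t * s"
    by (simp add: power2_eq_square)
  then have s2: "t + (1 - t) * s\<^sup>2 = t / (1 - t)"
    using t by (simp add: s_def field_simps)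
  have "f (y - v) \<le> f y - gradf y \<bullet> v + L / 2 * (N v)\<^sup>2"
    using smooth_descent[OF N f_grad f_smooth, of y "- v"] by (simp add: is_norm_minus[OF N])
  then have "t * f (y - v) \<le> t * (f y - gradf y \<bullet> v + L / 2 * (N v)\<^sup>2)"
    using t by (intro mult_left_mono) auto
  moreover have "f (y + s *\<^sub>R v) \<le> f y + s * (gradf y \<bullet> v) + L / 2 * s\<^sup>2 * (N v)\<^sup>2"
    using smooth_descent[OF N f_grad f_smooth, of y "s *\<^sub>R v"] s(1)
    by (simp add: is_normD(2)[OF N] power_mult_distrib mult.assoc)
  then have "(1 - t) * f (y + s *\<^sub>R v) \<le> (1 - t) * (f y + s * (gradf y \<bullet> v) + L / 2 * s\<^sup>2 * (N v)\<^sup>2)"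
    using t by (intro mult_left_mono) auto
  moreover have "t * (f y - gradf y \<bullet> v + L / 2 * (N v)\<^sup>2)
      + (1 - t) * (f y + s * (gradf y \<bullet> v) + L / 2 * s\<^sup>2 * (N v)\<^sup>2)
      = f y + ((1 - t) * s - t) * (gradf y \<bullet> v) + L / 2 * (t + (1 - t) * s\<^sup>2) * (N v)\<^sup>2"
    by (simp add: field_simps)
  moreover have "f y + ((1 - t) * s - t) * (gradf y \<bullet> v) + L / 2 * (t + (1 - t) * s\<^sup>2) * (N v)\<^sup>2
      = f y + L * t / (2 * (1 - t)) * (N v)\<^sup>2"
    unfolding s(2) s2 by simp
  ultimately show ?thesis
    unfolding s_def[symmetric] by linarith
qed

lemma fenchel_young: "ereal (v \<bullet> x) - g x \<le> conj g v"
  unfolding conj_def by (rule SUP_upper) simp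

lemma conj_leI: "(\<And>x. ereal (v \<bullet> x) - g x \<le> c) \<Longrightarrow> conj g v \<le> c"
  unfolding conj_def by (rule SUP_least)

lemma conj_real_fun_eq_ereal:
  assumes "conj (\<lambda>x. ereal (f x)) v < \<infinity>"
  shows "conj (\<lambda>x. ereal (f x)) v = ereal (real_of_ereal (conj (\<lambda>x. ereal (f x)) v))"
proof -
  have "ereal (v \<bullet> 0 - f 0) \<le> conj (\<lambda>x. ereal (f x)) v"
    using fenchel_young[of v 0 "\<lambda>x. ereal (f x)"] by simp
  then show ?thesis
    using assms by (cases "conj (\<lambda>x. ereal (f x)) v") auto
qed

lemma conj_at_gradient:
  fixes f :: "'a::real_inner \<Rightarrow> real"
  assumes "convex_on UNIV f"
    and "\<And>x. (f has_derivative (\<lambda>v. gradf x \<bullet> v)) (at x)"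
  shows "conj (\<lambda>x. ereal (f x)) (gradf x) = ereal (gradf x \<bullet> x - f x)"
proof (rule antisym)
  show "conj (\<lambda>x. ereal (f x)) (gradf x) \<le> ereal (gradf x \<bullet> x - f x)"
  proof (rule conj_leI)
    fix y
    show "ereal (gradf x \<bullet> y) - ereal (f y) \<le> ereal (gradf x \<bullet> x - f x)"
      using convex_gradient_inequality[OF assms, of x y] by (simp add: inner_diff_right)
  qed
qed (use fenchel_young[of "gradf x" x "\<lambda>x. ereal (f x)"] in simp)

lemma conj_smooth_convex_combination:
  fixes f :: "'a::euclidean_space \<Rightarrow> real"
  assumes N: "is_norm N"
    and f_grad: "\<And>x. (f has_derivative (\<lambda>v. gradf x \<bullet> v)) (at x)"
    and f_smooth: "\<And>x x'. dual_norm N (gradf x - gradf x') \<le> L * N (x - x')"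
    and t: "0 \<le> t" "t < 1"
    and A: "conj (\<lambda>x. ereal (f x)) a \<le> ereal A"
    and B: "conj (\<lambda>x. ereal (f x)) b \<le> ereal B"
  shows "conj (\<lambda>x. ereal (f x)) (t *\<^sub>R a + (1 - t) *\<^sub>R b)
           \<le> ereal (t * A + (1 - t) * B + t * ((a - b) \<bullet> v) + L * t / (2 * (1 - t)) * (N v)\<^sup>2)"
proof (rule conj_leI)
  fix y
  define s where "s = t / (1 - t)"
  have "ereal (a \<bullet> (y - v) - f (y - v)) \<le> ereal A"
    using order_trans[OF fenchel_young A] by simp
  then have "t * (a \<bullet> (y - v) - f (y - v)) \<le> t * A"
    using t by (intro mult_left_mono) simp_all
  moreover have "ereal (b \<bullet> (y + s *\<^sub>R v) - f (y + s *\<^sub>R v)) \<le> ereal B"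
    using order_trans[OF fenchel_young B] by simp
  then have "(1 - t) * (b \<bullet> (y + s *\<^sub>R v) - f (y + s *\<^sub>R v)) \<le> (1 - t) * B"
    using t by (intro mult_left_mono) simp_all
  moreover have "(1 - t) * (b \<bullet> (s *\<^sub>R v)) = t * (b \<bullet> v)"
    using t by (simp add: s_def)
  then have "(t *\<^sub>R a + (1 - t) *\<^sub>R b) \<bullet> y
      = t * (a \<bullet> (y - v)) + (1 - t) * (b \<bullet> (y + s *\<^sub>R v)) + t * ((a - b) \<bullet> v)"
    by (simp only: inner_add_left inner_add_right inner_diff_left inner_diff_right inner_scaleR_left
        distrib_left right_diff_distrib)
  moreover note smooth_two_point[OF N f_grad f_smooth t, of y v, folded s_def]
  ultimately have "(t *\<^sub>R a + (1 - t) *\<^sub>R b) \<bullet> y - f y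
      \<le> t * A + (1 - t) * B + t * ((a - b) \<bullet> v) + L * t / (2 * (1 - t)) * (N v)\<^sup>2"
    by (simp only: right_diff_distrib)
  then show "ereal ((t *\<^sub>R a + (1 - t) *\<^sub>R b) \<bullet> y) - ereal (f y)
      \<le> ereal (t * A + (1 - t) * B + t * ((a - b) \<bullet> v) + L * t / (2 * (1 - t)) * (N v)\<^sup>2)"
    by simp
qed

section \<open>The regularised function h + \<alpha> w and its conjugate\<close>

lemma closed_fun_sublevel:
  assumes "closed_fun g"
  shows "closed {x. g x \<le> ereal c}"
proof -
  have "{x. g x \<le> ereal c} = (\<lambda>x. (x, c)) -` epigraph g"
    by (auto simp: epigraph_def)
  then show ?thesis
    using assms unfolding closed_fun_def
    by (auto intro!: continuous_closed_vimage continuous_intros)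
qed

lemma closed_fun_bounded_below:
  fixes h :: "'a::{real_normed_vector,heine_borel} \<Rightarrow> ereal"
  assumes "closed_fun h" "proper_fun h" "bounded (edom h)"
  obtains m where "\<And>x. ereal m \<le> h x"
proof (rule ccontr)
  assume "\<not> thesis"
  then have "\<exists>x. h x \<le> ereal c" for c
    using that by (meson linear)
  define F where "F n = {x. h x \<le> ereal (- real n)}" for n :: nat
  have "compact (F n)" for n
  proof -
    have "F n \<subseteq> edom h"
      by (auto simp: F_def edom_def)
    then show ?thesis
      using closed_fun_sublevel[OF assms(1)] assms(3) unfolding F_def
      by (metis bounded_subset compact_eq_bounded_closed)
  qed
  moreover have "F n \<noteq> {}" for n
    using \<open>\<exists>x. h x \<le> ereal (- real n)\<close> by (auto simp: F_def)
  moreover have "F n \<subseteq> F m" if "m \<le> n" for m n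
    using that by (auto simp: F_def intro: order_trans)
  ultimately obtain x where x: "\<And>n. h x \<le> ereal (- real n)"
    using compact_nest[of F] unfolding F_def by blast
  show False
  proof (cases "h x")
    case (real r)
    obtain n :: nat where "- r < real n"
      using reals_Archimedean2 by blast
    then show False
      using x[of n] real by simp
  qed (use x[of 0] assms(2) in \<open>auto simp: proper_fun_def\<close>)
qed

lemma closed_joint_sublevel:
  assumes "closed_fun h" "closed_fun w"
  shows "closed {(x, a, b). h x \<le> ereal a \<and> w x \<le> ereal b}"
proof -
  have "{(x, a, b). h x \<le> ereal a \<and> w x \<le> ereal b}
      = (\<lambda>p. (fst p, fst (snd p))) -` epigraph h \<inter> (\<lambda>p. (fst p, snd (snd p))) -` epigraph w"
    by (auto simp: epigraph_def)
  then show ?thesis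
    using assms unfolding closed_fun_def
    by (auto intro!: closed_Int continuous_closed_vimage continuous_intros)
qed

lemma supporting_affine_gradient_eq:
  fixes F :: "'a::real_inner \<Rightarrow> real"
  assumes "(F has_derivative (\<lambda>d. g \<bullet> d)) (at u)"
    and "\<And>v. v \<bullet> a - c \<le> F v" "F u = u \<bullet> a - c"
  shows "g = a"
proof -
  have "((\<lambda>v. F v - v \<bullet> a) has_derivative (\<lambda>d. g \<bullet> d - d \<bullet> a)) (at u)"
    by (rule has_derivative_diff[OF assms(1)]) (auto intro!: derivative_eq_intros)
  moreover have "eventually (\<lambda>v. F u - u \<bullet> a \<le> F v - v \<bullet> a) (at u)"
    using assms(2,3) by (intro always_eventually) (smt (verit))
  ultimately have "(\<lambda>d. g \<bullet> d - d \<bullet> a) = (\<lambda>d. 0)"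
    by (rule has_derivative_local_min)
  then have "g \<bullet> (g - a) - (g - a) \<bullet> a = 0"
    by metis
  then have "(g - a) \<bullet> (g - a) = 0"
    by (simp add: inner_diff_left inner_diff_right inner_commute)
  then show ?thesis
    by simp
qed

locale regularizer =
  fixes N :: "'a::euclidean_space \<Rightarrow> real" and h w :: "'a \<Rightarrow> ereal" and \<alpha> :: real
  assumes h_closed: "closed_fun h" and h_proper: "proper_fun h" and h_convex: "convex_fun h"
    and h_bdd: "bounded (edom h)"
    and w_nonneg: "\<And>x. w x \<ge> 0"
    and w_closed: "closed_fun w"
    and w_sc: "strongly_convex_on (edom h) 1 N w"
    and w_max: "\<exists>M::real. \<forall>x\<in>edom h. w x \<le> ereal M"
    and \<alpha>_pos: "\<alpha> > 0"
begin

abbreviation h_reg :: "'a \<Rightarrow> ereal" where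
  "h_reg \<equiv> \<lambda>x. h x + ereal \<alpha> * w x"

text \<open>Since real_of_ereal sends \<infinity> to 0, reg is
  h^\<alpha> only on edom h; conj_reg is (h^\<alpha>)* everywhere, which is finite by conj_h_reg_eq.\<close>

definition reg :: "'a \<Rightarrow> real" where
  "reg x = real_of_ereal (h x) + \<alpha> * real_of_ereal (w x)"

definition conj_reg :: "'a \<Rightarrow> real" where
  "conj_reg u = real_of_ereal (conj h_reg u)"

lemma finite_on_edom:
  assumes "x \<in> edom h"
  shows "h x = ereal (real_of_ereal (h x))" "w x = ereal (real_of_ereal (w x))"
proof -
  obtain M where "w x \<le> ereal M"
    using w_max assms by blast
  then show "w x = ereal (real_of_ereal (w x))"
    using w_nonneg[of x] by (cases "w x") auto
  show "h x = ereal (real_of_ereal (h x))"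
    using assms h_proper by (cases "h x") (auto simp: edom_def proper_fun_def)
qed

lemma h_reg_eq: "x \<in> edom h \<Longrightarrow> h_reg x = ereal (reg x)"
  unfolding reg_def by (metis finite_on_edom plus_ereal.simps(1) times_ereal.simps(1))

lemma h_reg_outside: "x \<notin> edom h \<Longrightarrow> h_reg x = \<infinity>"
  using w_nonneg[of x] \<alpha>_pos by (auto simp: edom_def)

lemma reg_strongly_convex:
  assumes x: "x \<in> edom h" and y: "y \<in> edom h" and t: "0 \<le> t" "t \<le> 1"
  shows "t *\<^sub>R x + (1 - t) *\<^sub>R y \<in> edom h"
    and "reg (t *\<^sub>R x + (1 - t) *\<^sub>R y)
           \<le> t * reg x + (1 - t) * reg y - \<alpha> / 2 * t * (1 - t) * (N (x - y))\<^sup>2"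
proof -
  let ?xy = "t *\<^sub>R x + (1 - t) *\<^sub>R y"
  have "(x, real_of_ereal (h x)) \<in> epigraph h" "(y, real_of_ereal (h y)) \<in> epigraph h"
    using finite_on_edom(1)[OF x] finite_on_edom(1)[OF y] by (auto simp: epigraph_def)
  then have "t *\<^sub>R (x, real_of_ereal (h x)) + (1 - t) *\<^sub>R (y, real_of_ereal (h y)) \<in> epigraph h"
    using h_convex t unfolding convex_fun_def by (intro convexD) auto
  then have h_le: "h ?xy \<le> ereal (t * real_of_ereal (h x) + (1 - t) * real_of_ereal (h y))"
    by (simp add: epigraph_def)
  then show xy: "?xy \<in> edom h"
    by (auto simp: edom_def)
  have "w ?xy \<le> ereal t * w x + ereal (1 - t) * w y - ereal (1 / 2 * t * (1 - t) * (N (x - y))\<^sup>2)"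
    using w_sc x y t unfolding strongly_convex_on_def by auto
  also have "\<dots> = ereal (t * real_of_ereal (w x) + (1 - t) * real_of_ereal (w y)
      - 1 / 2 * t * (1 - t) * (N (x - y))\<^sup>2)"
    by (subst finite_on_edom(2)[OF x], subst finite_on_edom(2)[OF y]) simp
  finally have "real_of_ereal (w ?xy) \<le> t * real_of_ereal (w x) + (1 - t) * real_of_ereal (w y)
      - 1 / 2 * t * (1 - t) * (N (x - y))\<^sup>2"
    by (subst (asm) finite_on_edom(2)[OF xy]) simp
  then have "\<alpha> * real_of_ereal (w ?xy) \<le> \<alpha> * (t * real_of_ereal (w x) + (1 - t) * real_of_ereal (w y)
      - 1 / 2 * t * (1 - t) * (N (x - y))\<^sup>2)"
    using \<alpha>_pos by (intro mult_left_mono) auto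
  moreover have "real_of_ereal (h ?xy) \<le> t * real_of_ereal (h x) + (1 - t) * real_of_ereal (h y)"
    using h_le by (subst (asm) finite_on_edom(1)[OF xy]) simp
  ultimately show "reg ?xy \<le> t * reg x + (1 - t) * reg y - \<alpha> / 2 * t * (1 - t) * (N (x - y))\<^sup>2"
    unfolding reg_def by (simp add: algebra_simps)
qed

lemma edom_bounds:
  obtains m M B where "\<And>x. x \<in> edom h \<Longrightarrow> m \<le> real_of_ereal (h x) \<and> 0 \<le> real_of_ereal (w x)
    \<and> real_of_ereal (w x) \<le> M \<and> norm x \<le> B"
proof -
  obtain m where m: "\<And>x. ereal m \<le> h x"
    using closed_fun_bounded_below[OF h_closed h_proper h_bdd] by blast
  obtain M where M: "\<And>x. x \<in> edom h \<Longrightarrow> w x \<le> ereal M"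
    using w_max by blast
  obtain B where B: "\<And>x. x \<in> edom h \<Longrightarrow> norm x \<le> B"
    using h_bdd by (auto simp: bounded_iff)
  have "m \<le> real_of_ereal (h x) \<and> 0 \<le> real_of_ereal (w x) \<and> real_of_ereal (w x) \<le> M"
    if "x \<in> edom h" for x
    using m[of x] w_nonneg[of x] M[OF that] finite_on_edom[OF that]
    by (metis ereal_less_eq(3) zero_ereal_def)
  with B show thesis
    using that by blast
qed

lemma reg_le_relaxed:
  assumes "h x \<le> ereal a" "w x \<le> ereal b"
  shows "x \<in> edom h" "reg x \<le> a + \<alpha> * b"
proof -
  show x: "x \<in> edom h"
    using assms(1) by (auto simp: edom_def)
  have "real_of_ereal (h x) \<le> a" "real_of_ereal (w x) \<le> b"
    using assms finite_on_edom[OF x] by (metis ereal_less_eq(3))+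
  then show "reg x \<le> a + \<alpha> * b"
    using \<alpha>_pos unfolding reg_def by (simp add: add_mono)
qed

lemma reg_maximizer_exists:
  obtains xu where "xu \<in> edom h" "\<And>x. x \<in> edom h \<Longrightarrow> u \<bullet> x - reg x \<le> u \<bullet> xu - reg xu"
proof -
  obtain m M B where bounds: "\<And>x. x \<in> edom h \<Longrightarrow> m \<le> real_of_ereal (h x)
      \<and> 0 \<le> real_of_ereal (w x) \<and> real_of_ereal (w x) \<le> M \<and> norm x \<le> B"
    using edom_bounds by blast
  obtain x0 where x0: "x0 \<in> edom h"
    using h_proper by (auto simp: proper_fun_def edom_def)
  define C where "C = norm u * B - (u \<bullet> x0 - reg x0)"
  define G where "G p = u \<bullet> fst p - fst (snd p) - \<alpha> * snd (snd p)" for p :: "'a \<times> real \<times> real"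
  define K where "K = {(x, a, b). h x \<le> ereal a \<and> w x \<le> ereal b} \<inter> (cball 0 B \<times> {m..C} \<times> {0..M})"
  txt \<open>The values of h and w are relaxed to free coordinates in K: this makes the relevant
    superlevel set compact without having to show that h + \<alpha> w is closed.\<close>
  have lift: "(x, real_of_ereal (h x), real_of_ereal (w x)) \<in> K"
    if x: "x \<in> edom h" and above: "u \<bullet> x0 - reg x0 \<le> u \<bullet> x - reg x" for x
  proof -
    have "u \<bullet> x \<le> norm u * B"
      using norm_cauchy_schwarz[of u x] bounds[OF x] by (meson norm_ge_zero mult_left_mono order_trans)
    moreover have "0 \<le> \<alpha> * real_of_ereal (w x)"
      using bounds[OF x] \<alpha>_pos by simp
    ultimately show ?thesis
      using above bounds[OF x] finite_on_edom[OF x] unfolding K_def C_def reg_def by auto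
  qed
  have "compact K"
    unfolding K_def compact_eq_bounded_closed
    by (auto intro!: closed_Int closed_joint_sublevel h_closed w_closed closed_Times
        bounded_Int bounded_Times)
  moreover have "K \<noteq> {}" "continuous_on K G"
    using lift[OF x0] unfolding G_def by (auto intro!: continuous_intros)
  ultimately obtain p where p: "p \<in> K" and p_max: "\<And>q. q \<in> K \<Longrightarrow> G q \<le> G p"
    using continuous_attains_sup[of K G] by blast
  have "h (fst p) \<le> ereal (fst (snd p))" "w (fst p) \<le> ereal (snd (snd p))"
    using p by (auto simp: K_def)
  note xu = reg_le_relaxed[OF this]
  then have G_p: "G p \<le> u \<bullet> fst p - reg (fst p)"
    unfolding G_def by simp
  have "u \<bullet> x - reg x \<le> u \<bullet> fst p - reg (fst p)" if x: "x \<in> edom h" for x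
  proof (cases "u \<bullet> x0 - reg x0 \<le> u \<bullet> x - reg x")
    case True
    then show ?thesis
      using p_max[OF lift[OF x True]] G_p unfolding G_def reg_def by simp
  next
    case False
    then show ?thesis
      using p_max[OF lift[OF x0 order.refl]] G_p unfolding G_def reg_def by simp
  qed
  with xu(1) show thesis
    using that by blast
qed

lemma conj_h_reg_at_maximizer:
  assumes xu: "xu \<in> edom h" and max: "\<And>x. x \<in> edom h \<Longrightarrow> u \<bullet> x - reg x \<le> u \<bullet> xu - reg xu"
  shows "conj h_reg u = ereal (u \<bullet> xu - reg xu)"
proof (rule antisym)
  show "conj h_reg u \<le> ereal (u \<bullet> xu - reg xu)"
  proof (rule conj_leI)
    fix x
    show "ereal (u \<bullet> x) - h_reg x \<le> ereal (u \<bullet> xu - reg xu)"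
      using max[of x] by (cases "x \<in> edom h") (simp_all add: h_reg_eq h_reg_outside)
  qed
  show "ereal (u \<bullet> xu - reg xu) \<le> conj h_reg u"
    using fenchel_young[of u xu h_reg] by (simp add: h_reg_eq[OF xu])
qed

lemma conj_h_reg_eq: "conj h_reg u = ereal (conj_reg u)"
proof -
  obtain xu where "xu \<in> edom h" "\<And>x. x \<in> edom h \<Longrightarrow> u \<bullet> x - reg x \<le> u \<bullet> xu - reg xu"
    using reg_maximizer_exists by blast
  from conj_h_reg_at_maximizer[OF this] show ?thesis
    by (simp add: conj_reg_def)
qed

lemma reg_fenchel_young: "x \<in> edom h \<Longrightarrow> u \<bullet> x - reg x \<le> conj_reg u"
  using fenchel_young[of u x h_reg] by (simp add: h_reg_eq conj_h_reg_eq)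

lemma reg_quadratic_growth:
  assumes xu: "xu \<in> edom h" and max: "\<And>x. x \<in> edom h \<Longrightarrow> u \<bullet> x - reg x \<le> u \<bullet> xu - reg xu"
    and x: "x \<in> edom h"
  shows "reg xu + u \<bullet> (x - xu) + \<alpha> / 2 * (N (x - xu))\<^sup>2 \<le> reg x"
proof -
  define D where "D = reg x - reg xu - u \<bullet> (x - xu)"
  have "s * (\<alpha> / 2 * (N (x - xu))\<^sup>2) \<le> D" if s: "0 < s" "s < 1" for s
  proof -
    define t where "t = 1 - s"
    have t: "0 < t" "t \<le> 1" "1 - t = s"
      using s by (simp_all add: t_def)
    let ?xt = "t *\<^sub>R x + (1 - t) *\<^sub>R xu"
    have "u \<bullet> ?xt - reg ?xt \<le> u \<bullet> xu - reg xu"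
      using t by (intro max reg_strongly_convex(1)[OF x xu]) simp_all
    moreover have "reg ?xt \<le> t * reg x + (1 - t) * reg xu - \<alpha> / 2 * t * (1 - t) * (N (x - xu))\<^sup>2"
      using reg_strongly_convex(2)[OF x xu, of t] t(1,2) by simp
    moreover have "u \<bullet> ?xt = u \<bullet> xu + t * (u \<bullet> (x - xu))"
      by (simp add: inner_add_right inner_diff_right algebra_simps)
    ultimately have "t * ((1 - t) * (\<alpha> / 2 * (N (x - xu))\<^sup>2)) \<le> t * D"
      unfolding D_def by (simp add: algebra_simps)
    then show ?thesis
      using t by simp
  qed
  then have "\<alpha> / 2 * (N (x - xu))\<^sup>2 \<le> D"
    by (rule field_le_mult_one_interval)
  then show ?thesis
    unfolding D_def by simp
qed

lemma gradient_conj_reg: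
  assumes "(conj_reg has_derivative (\<lambda>v. g \<bullet> v)) (at u)"
  shows "g \<in> edom h" "conj_reg u = u \<bullet> g - reg g"
proof -
  obtain xu where xu: "xu \<in> edom h" and max: "\<And>x. x \<in> edom h \<Longrightarrow> u \<bullet> x - reg x \<le> u \<bullet> xu - reg xu"
    using reg_maximizer_exists by blast
  have "conj_reg u = u \<bullet> xu - reg xu"
    using conj_h_reg_at_maximizer[OF xu max] by (simp add: conj_reg_def)
  moreover have "g = xu"
    using assms reg_fenchel_young[OF xu] calculation
    by (intro supporting_affine_gradient_eq[where F = conj_reg and c = "reg xu"]) simp_all
  ultimately show "g \<in> edom h" "conj_reg u = u \<bullet> g - reg g"
    using xu by simp_all
qed

lemma conj_reg_gradient_bound:
  assumes g: "(conj_reg has_derivative (\<lambda>v. g \<bullet> v)) (at u)"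
    and g': "(conj_reg has_derivative (\<lambda>v. g' \<bullet> v)) (at u')"
  shows "conj_reg u' \<le> conj_reg u + (u' - u) \<bullet> g' - \<alpha> / 2 * (N (g' - g))\<^sup>2"
proof -
  note gradient_conj_reg[OF g] gradient_conj_reg[OF g']
  moreover have "reg g + u \<bullet> (g' - g) + \<alpha> / 2 * (N (g' - g))\<^sup>2 \<le> reg g'"
    using calculation reg_fenchel_young[of _ u] by (intro reg_quadratic_growth) auto
  ultimately show ?thesis
    by (simp add: inner_diff_left inner_diff_right inner_commute)
qed

end

section \<open>The generalised conditional gradient method\<close>

locale gcg = regularizer N h w \<alpha>
  for N :: "'a::euclidean_space \<Rightarrow> real" and h w :: "'a \<Rightarrow> ereal" and \<alpha> :: real +
  fixes f :: "'a \<Rightarrow> real" and gradf :: "'a \<Rightarrow> 'a" and L \<eta> :: real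
    and gH :: "'a \<Rightarrow> 'a" and z zbar y :: "nat \<Rightarrow> 'a"
  assumes N: "is_norm N"
    and L: "L > 0"
    and f_convex: "convex_on UNIV f"
    and f_grad: "\<And>x. (f has_derivative (\<lambda>v. gradf x \<bullet> v)) (at x)"
    and f_smooth: "\<And>x x'. dual_norm N (gradf x - gradf x') \<le> L * N (x - x')"
    and \<eta>: "\<eta> = \<alpha> / (L + \<alpha>)"
    and gH: "\<And>u. ((\<lambda>u. real_of_ereal (conj h_reg u)) has_derivative (\<lambda>v. gH u \<bullet> v)) (at u)"
    and zbar: "\<And>k v. ereal (- gH (- z k) \<bullet> zbar k) + conj (\<lambda>x. ereal (f x)) (zbar k)
                     \<le> ereal (- gH (- z k) \<bullet> v) + conj (\<lambda>x. ereal (f x)) v"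
    and z0: "conj (\<lambda>x. ereal (f x)) (z 0) < \<infinity>"
    and z_step: "\<And>k. z (Suc k) = \<eta> *\<^sub>R zbar k + (1 - \<eta>) *\<^sub>R z k"
    and y0: "y 0 = gH (- z 0)"
    and y_step: "\<And>k. y (Suc k) = (1 - \<eta>) *\<^sub>R y k + \<eta> *\<^sub>R gH (- z k)"
begin

abbreviation f_conj :: "'a \<Rightarrow> ereal" where
  "f_conj \<equiv> conj (\<lambda>x. ereal (f x))"

text \<open>The primal-dual gap \<psi>^\<alpha>(z_k) + \<phi>^\<alpha>(y_k) of the paper, in real arithmetic.\<close>

definition gap :: "nat \<Rightarrow> real" where
  "gap k = conj_reg (- z k) + real_of_ereal (f_conj (z k)) + f (y k) + reg (y k)"

lemma gH_gradient: "(conj_reg has_derivative (\<lambda>v. gH u \<bullet> v)) (at u)"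
  using gH unfolding conj_reg_def[abs_def] .

lemma \<eta>_bounds: "0 < \<eta>" "\<eta> < 1"
  using \<alpha>_pos L by (simp_all add: \<eta> divide_less_eq)

lemma one_minus_\<eta>: "1 - \<eta> = L / (L + \<alpha>)"
  using \<alpha>_pos L by (simp add: \<eta> field_simps)

lemma \<eta>_smoothness_constant: "L * \<eta> / (2 * (1 - \<eta>)) = \<alpha> / 2"
proof -
  have "L * \<eta> / (2 * (1 - \<eta>)) = L * \<alpha> / (L + \<alpha>) / (2 * L / (L + \<alpha>))"
    unfolding one_minus_\<eta> by (simp add: \<eta>)
  also have "\<dots> = \<alpha> / 2"
    using \<alpha>_pos L by (simp add: field_simps add_pos_pos[THEN less_imp_neq, symmetric])
  finally show ?thesis .
qed

lemma conj_zbar_le: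
  "f_conj (zbar k) \<le> ereal (gH (- z k) \<bullet> zbar k - f (gH (- z k)))"
proof -
  define x where "x = gH (- z k)"
  have "ereal (- x \<bullet> zbar k) + f_conj (zbar k) \<le> ereal (- x \<bullet> gradf x) + f_conj (gradf x)"
    using zbar[of k "gradf x"] by (simp add: x_def)
  also have "\<dots> = ereal (- f x)"
    by (simp add: conj_at_gradient[OF f_convex f_grad] inner_commute)
  finally show ?thesis
    unfolding x_def[symmetric] by (cases "f_conj (zbar k)") (simp_all add: inner_commute)
qed

lemma conj_f_step:
  fixes k :: nat
  assumes "f_conj (z k) < \<infinity>"
  defines "x \<equiv> gH (- z k)" and "x' \<equiv> gH (- z (Suc k))"
  shows "f_conj (z (Suc k)) \<le> ereal (\<eta> * (x \<bullet> zbar k - f x) + (1 - \<eta>) * real_of_ereal (f_conj (z k))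
      + \<eta> * ((zbar k - z k) \<bullet> (x' - x)) + \<alpha> / 2 * (N (x' - x))\<^sup>2)"
  using conj_smooth_convex_combination[OF N f_grad f_smooth, of \<eta> "zbar k" "x \<bullet> zbar k - f x"
      "z k" "real_of_ereal (f_conj (z k))" "x' - x", unfolded \<eta>_smoothness_constant]
    conj_zbar_le conj_real_fun_eq_ereal[OF assms(1)] \<eta>_bounds
  by (simp add: z_step x_def)

lemma conj_reg_step:
  fixes k :: nat
  defines "x \<equiv> gH (- z k)" and "x' \<equiv> gH (- z (Suc k))"
  shows "conj_reg (- z (Suc k))
      \<le> conj_reg (- z k) + \<eta> * ((z k - zbar k) \<bullet> x') - \<alpha> / 2 * (N (x' - x))\<^sup>2"
  using conj_reg_gradient_bound[OF gH_gradient gH_gradient, where u = "- z k" and u' = "- z (Suc k)"]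
  by (simp add: x_def x'_def z_step algebra_simps)

lemma primal_step:
  fixes k :: nat
  assumes y: "y k \<in> edom h"
  defines "x \<equiv> gH (- z k)"
  shows "y (Suc k) \<in> edom h"
    and "f (y (Suc k)) + reg (y (Suc k)) \<le> (1 - \<eta>) * (f (y k) + reg (y k)) + \<eta> * (f x + reg x)"
proof -
  note \<eta> = \<eta>_bounds
  have x: "x \<in> edom h"
    unfolding x_def by (rule gradient_conj_reg(1)[OF gH_gradient])
  have y': "y (Suc k) = (1 - \<eta>) *\<^sub>R y k + (1 - (1 - \<eta>)) *\<^sub>R x"
    by (simp add: y_step x_def)
  show "y (Suc k) \<in> edom h"
    using reg_strongly_convex(1)[OF y x, of "1 - \<eta>"] \<eta> by (simp add: y')
  have "f (y (Suc k)) \<le> (1 - \<eta>) * f (y k) + \<eta> * f x"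
    using convex_onD[OF f_convex, of \<eta> "y k" x] \<eta> by (simp add: y')
  moreover have "reg (y (Suc k))
      \<le> (1 - \<eta>) * reg (y k) + \<eta> * reg x - \<alpha> / 2 * (1 - \<eta>) * \<eta> * (N (y k - x))\<^sup>2"
    using reg_strongly_convex(2)[OF y x, of "1 - \<eta>"] \<eta> unfolding y'[symmetric] by simp
  moreover have "0 \<le> \<alpha> / 2 * (1 - \<eta>) * \<eta> * (N (y k - x))\<^sup>2"
    using \<eta> \<alpha>_pos by simp
  ultimately have "f (y (Suc k)) + reg (y (Suc k))
      \<le> (1 - \<eta>) * f (y k) + \<eta> * f x + ((1 - \<eta>) * reg (y k) + \<eta> * reg x)"
    by linarith
  then show "f (y (Suc k)) + reg (y (Suc k)) \<le> (1 - \<eta>) * (f (y k) + reg (y k)) + \<eta> * (f x + reg x)"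
    by (simp add: algebra_simps)
qed

text \<open>The price \<eta> (zbar k - z k) \<bullet> (x' - x) + \<alpha>/2 N(x' - x)^2 paid by the smoothness bound on
  the conjugate of f is refunded exactly by the strong concavity gain on the conjugate of h + \<alpha> w;
  this is what the step size \<eta> = \<alpha> / (L + \<alpha>) is tuned for.\<close>

lemma gap_step:
  assumes Fz: "f_conj (z k) < \<infinity>" and y: "y k \<in> edom h"
  shows "f_conj (z (Suc k)) < \<infinity>" "y (Suc k) \<in> edom h" "gap (Suc k) \<le> (1 - \<eta>) * gap k"
proof -
  define x where "x = gH (- z k)"
  note F_bound = conj_f_step[OF Fz, folded x_def]
  then show F': "f_conj (z (Suc k)) < \<infinity>"
    by auto
  show "y (Suc k) \<in> edom h"
    by (rule primal_step(1)[OF y])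
  have x: "conj_reg (- z k) = - z k \<bullet> x - reg x"
    unfolding x_def by (rule gradient_conj_reg(2)[OF gH_gradient])
  have "real_of_ereal (f_conj (z (Suc k))) \<le> \<eta> * (x \<bullet> zbar k - f x)
      + (1 - \<eta>) * real_of_ereal (f_conj (z k)) + \<eta> * ((zbar k - z k) \<bullet> (gH (- z (Suc k)) - x))
      + \<alpha> / 2 * (N (gH (- z (Suc k)) - x))\<^sup>2"
    using F_bound conj_real_fun_eq_ereal[OF F'] by (metis ereal_less_eq(3))
  then show "gap (Suc k) \<le> (1 - \<eta>) * gap k"
    using conj_reg_step[of k, folded x_def] primal_step(2)[OF y, folded x_def]
    unfolding gap_def x
    by (simp add: algebra_simps inner_diff_left inner_diff_right inner_commute)
qed

lemma gap_contraction: "f_conj (z k) < \<infinity> \<and> y k \<in> edom h \<and> gap k \<le> (1 - \<eta>) ^ k * gap 0"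
proof (induction k)
  case 0
  show ?case
    using z0 gradient_conj_reg(1)[OF gH_gradient] by (simp add: y0)
next
  case (Suc k)
  then have "f_conj (z k) < \<infinity>" "y k \<in> edom h" and IH: "gap k \<le> (1 - \<eta>) ^ k * gap 0"
    by auto
  note step = gap_step[OF this(1,2)]
  have "gap (Suc k) \<le> (1 - \<eta>) * gap k"
    by (rule step(3))
  also have "\<dots> \<le> (1 - \<eta>) ^ Suc k * gap 0"
    using IH \<eta>_bounds by (simp add: mult_left_mono)
  finally show ?case
    using step(1,2) by simp
qed

lemma gap_linear_rate: "gap k \<le> gap 0 / (1 + \<alpha> / L) ^ k"
proof -
  have "1 - \<eta> = 1 / (1 + \<alpha> / L)"
    unfolding one_minus_\<eta> using L \<alpha>_pos by (simp add: field_simps)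
  then have "(1 - \<eta>) ^ k * gap 0 = gap 0 / (1 + \<alpha> / L) ^ k"
    by (simp add: power_one_over)
  then show ?thesis
    using gap_contraction[of k] by simp
qed

lemma primal_dual_gap_eq:
  "conj h_reg (- z k) + f_conj (z k) + (ereal (f (y k)) + h_reg (y k)) = ereal (gap k)"
proof -
  have "f_conj (z k) < \<infinity>" "y k \<in> edom h"
    using gap_contraction[of k] by simp_all
  then show ?thesis
    unfolding gap_def conj_h_reg_eq by (subst conj_real_fun_eq_ereal) (simp_all add: h_reg_eq)
qed

end

theorem propositionB4:
  fixes N :: "real^'n \<Rightarrow> real"
    and f :: "real^'n \<Rightarrow> real" and gradf :: "real^'n \<Rightarrow> real^'n"
    and h w :: "real^'n \<Rightarrow> ereal"
    and L \<alpha> \<eta> :: real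
    and gH :: "real^'n \<Rightarrow> real^'n"
    and z zbar y :: "nat \<Rightarrow> real^'n"
  assumes N: "is_norm N"
    and L: "L > 0"
    and f_convex: "convex_on UNIV f"
    and f_grad: "\<And>x. (f has_derivative (\<lambda>v. gradf x \<bullet> v)) (at x)"
    and f_smooth: "\<And>x x'. dual_norm N (gradf x - gradf x') \<le> L * N (x - x')"
    and h_closed: "closed_fun h" and h_proper: "proper_fun h" and h_convex: "convex_fun h"
    and h_bdd: "bounded (edom h)"
    and w_nonneg: "\<And>x. w x \<ge> 0"
    and w_closed: "closed_fun w"
    and w_sc: "strongly_convex_on (edom h) 1 N w"
    and w_max: "\<exists>M::real. \<forall>x\<in>edom h. w x \<le> ereal M"
    and \<alpha>: "\<alpha> > 0"
    and \<eta>: "\<eta> = \<alpha> / (L + \<alpha>)"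
    and gH: "\<And>u. ((\<lambda>u. real_of_ereal (conj (\<lambda>x. h x + ereal \<alpha> * w x) u))
                     has_derivative (\<lambda>v. gH u \<bullet> v)) (at u)"
    and z0: "conj (\<lambda>x. ereal (f x)) (z 0) < \<infinity>"
    and zbar: "\<And>k v. ereal (- gH (- z k) \<bullet> zbar k) + conj (\<lambda>x. ereal (f x)) (zbar k)
                     \<le> ereal (- gH (- z k) \<bullet> v) + conj (\<lambda>x. ereal (f x)) v"
    and z_step: "\<And>k. z (Suc k) = \<eta> *\<^sub>R zbar k + (1 - \<eta>) *\<^sub>R z k"
    and y0: "y 0 = gH (- z 0)"
    and y_step: "\<And>k. y (Suc k) = (1 - \<eta>) *\<^sub>R y k + \<eta> *\<^sub>R gH (- z k)"
  shows "\<And>k. conj (\<lambda>x. h x + ereal \<alpha> * w x) (- z k) + conj (\<lambda>x. ereal (f x)) (z k)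
              + (ereal (f (y k)) + (h (y k) + ereal \<alpha> * w (y k)))
           \<le> (conj (\<lambda>x. h x + ereal \<alpha> * w x) (- z 0) + conj (\<lambda>x. ereal (f x)) (z 0)
              + (ereal (f (y 0)) + (h (y 0) + ereal \<alpha> * w (y 0))))
             / ereal ((1 + \<alpha> / L) ^ k)"
proof -
  interpret gcg N h w \<alpha> f gradf L \<eta> gH z zbar y
    by unfold_locales (fact assms)+
  fix k
  have "1 + \<alpha> / L > 0"
    using \<alpha> L by (intro add_pos_pos) simp_all
  then show "?thesis k"
    using gap_linear_rate[of k] by (simp add: primal_dual_gap_eq)
qed

end
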